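(* Let $f\colon \mathbb{R}^n \times \mathbb{R}^p \to \overline{\mathbb{R}}$ be a proper nearly convex function, let $m(x)=\inf\{f(x,y)\mid y\in\mathbb{R}^p\}$, and suppose $m$ is finite at $\bar x \in \mathbb{R}^n$. For $\eta>0$ let $S_\eta(\bar x)=\{y\in\mathbb{R}^p\mid f(\bar x,y)\le m(\bar x)+\eta\}$, and let $S(\bar x)=\{y\in\mathbb{R}^p\mid m(\bar x)=f(\bar x,y)\}$. Then for every $\varepsilon \ge 0$, $$\partial_\varepsilon m(\bar x) = \bigcap_{\eta >0}\ \bigcap_{y \in S_\eta (\bar x)} \big\{\xi \in \mathbb{R}^n \mid (\xi,0) \in \partial_{\varepsilon +\eta} f (\bar x, y) \big\} =\bigcap_{\eta >0}\ \bigcup_{y \in \mathbb{R}^p} \big\{\xi \in \mathbb{R}^n \mid (\xi,0) \in \partial_{\varepsilon +\eta} f (\bar x, y) \big\}.$$ In particular, $$\partial m(\bar x) = \bigcap_{\eta >0}\ \bigcap_{y \in S_\eta (\bar x)} \big\{\xi \in \mathbb{R}^n \mid (\xi,0) \in \partial_{\eta} f (\bar x, y) \big\} =\bigcap_{\eta >0}\ \bigcup_{y \in \mathbb{R}^p} \big\{\xi \in \mathbb{R}^n \mid (\xi,0) \in \partial_{\eta} f (\bar x, y) \big\}.$$ In addition, if $S(\bar x)\neq \emptyset$, then for every $\varepsilon \ge 0$ and all $y \in S(\bar x)$, $$\partial_\varepsilon m(\bar x) = \big\{\xi \in \mathbb{R}^n \mid (\xi,0) \in \partial_{\varepsilon}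 f (\bar x, y) \big\}.$$
   Context: $\overline{\mathbb{R}}=[-\infty,\infty]$; proper means nonempty domain and never $-\infty$. A set $D$ is nearly convex if there is a convex $E$ with $E\subset D\subset\overline{E}$; a function is nearly convex if its epigraph is nearly convex. For a function $\psi$ on $\mathbb{R}^k$, $\varepsilon\ge0$ and $\bar z$ with $\psi(\bar z)$ finite, $\partial_\varepsilon\psi(\bar z)=\{\zeta\in\mathbb{R}^k\mid\langle\zeta,z-\bar z\rangle-\varepsilon\le\psi(z)-\psi(\bar z)\ \forall z\in\mathbb{R}^k\}$, and $\partial\psi=\partial_0\psi$. *)

theory Defs
  imports "HOL-Analysis.Analysis" "HOL-Library.Extended_Real"
begin

definition proper_fun :: "('a \<Rightarrow> ereal) \<Rightarrow> bool" where
  "proper_fun f \<longleftrightarrow> (\<exists>z. f z < \<infinity>) \<and> (\<forall>z. f z \<noteq> -\<infinity>)"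

definition epigraph :: "('a \<Rightarrow> ereal) \<Rightarrow> ('a \<times> real) set" where
  "epigraph f = {(z, t). f z \<le> ereal t}"

definition nearly_convex_set :: "'a::real_normed_vector set \<Rightarrow> bool" where
  "nearly_convex_set D \<longleftrightarrow> (\<exists>E. convex E \<and> E \<subseteq> D \<and> D \<subseteq> closure E)"

definition nearly_convex_fun :: "('a::real_normed_vector \<Rightarrow> ereal) \<Rightarrow> bool" where
  "nearly_convex_fun f \<longleftrightarrow> nearly_convex_set (epigraph f)"

definition eps_subdiff :: "('a::real_inner \<Rightarrow> ereal) \<Rightarrow> real \<Rightarrow> 'a \<Rightarrow> 'a set" where
  "eps_subdiff \<psi> \<epsilon> zb = {\<zeta>. \<bar>\<psi> zb\<bar> \<noteq> \<infinity> \<and>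
      (\<forall>z. ereal (inner \<zeta> (z - zb) - \<epsilon>) \<le> \<psi> z - \<psi> zb)}"

abbreviation subdiff :: "('a::real_inner \<Rightarrow> ereal) \<Rightarrow> 'a \<Rightarrow> 'a set" where
  "subdiff \<psi> zb \<equiv> eps_subdiff \<psi> 0 zb"

definition marginal :: "('a \<times> 'b \<Rightarrow> ereal) \<Rightarrow> 'a \<Rightarrow> ereal" where
  "marginal f x = (INF y. f (x, y))"

end

theory Submission
  imports Defs
begin

text \<open>
  With \<open>M = m(x\<^sub>0)\<close>, a vector \<open>\<xi>\<close> lies in \<open>\<partial>\<^sub>\<epsilon>m(x\<^sub>0)\<close> iff
  \<open>\<langle>\<xi>, x - x\<^sub>0\<rangle> - \<epsilon> + M \<le> f(x, y')\<close> for all \<open>x, y'\<close>, whereas \<open>(\<xi>, 0) \<in> \<partial>\<^sub>\<delta>f(x\<^sub>0, y)\<close>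
  is the same inequality with \<open>M\<close> replaced by \<open>f(x\<^sub>0, y) - (\<delta> - \<epsilon>)\<close>. Since
  \<open>M \<le> f(x\<^sub>0, y)\<close> always and \<open>f(x\<^sub>0, y) \<le> M + \<eta>\<close> for \<open>\<eta>\<close>-optimal \<open>y\<close>, which exist for every
  \<open>\<eta> > 0\<close>, the two inequalities agree up to an arbitrarily small slack \<open>\<eta>\<close>, and exactly
  at minimizers.
\<close>

lemma eps_subdiff_finite: "\<zeta> \<in> eps_subdiff \<psi> \<epsilon> z \<Longrightarrow> \<bar>\<psi> z\<bar> \<noteq> \<infinity>"
  unfolding eps_subdiff_def by simp

lemma marginal_le: "marginal f x \<le> f (x, y)"
  unfolding marginal_def by (rule INF_lower) simp

lemma ex_less_marginal_plus:
  assumes "marginal f x = ereal M" and "\<eta> > 0"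
  obtains y where "f (x, y) < ereal (M + \<eta>)"
proof -
  have "(INF y. f (x, y)) < ereal (M + \<eta>)"
    using assms unfolding marginal_def by simp
  then show thesis using that by (auto simp: INF_less_iff)
qed

lemma eps_subdiff_marginal_iff:
  assumes "marginal f xb = ereal M"
  shows "\<xi> \<in> eps_subdiff (marginal f) \<epsilon> xb \<longleftrightarrow>
    (\<forall>x y'. ereal (inner \<xi> (x - xb) - \<epsilon> + M) \<le> f (x, y'))"
proof -
  have "\<xi> \<in> eps_subdiff (marginal f) \<epsilon> xb \<longleftrightarrow>
      (\<forall>x. ereal (inner \<xi> (x - xb) - \<epsilon> + M) \<le> marginal f x)"
    unfolding eps_subdiff_def using assms by (simp add: ereal_le_minus_iff)
  also have "\<dots> \<longleftrightarrow> (\<forall>x y'. ereal (inner \<xi> (x - xb) - \<epsilon> + M) \<le> f (x, y'))"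
    unfolding marginal_def by (meson INF_greatest INF_lower UNIV_I order_trans)
  finally show ?thesis .
qed

lemma pair_zero_in_eps_subdiff_iff:
  fixes f :: "'a::real_inner \<times> 'b::real_inner \<Rightarrow> ereal"
  assumes "f (xb, y) = ereal c"
  shows "(\<xi>, 0) \<in> eps_subdiff f \<delta> (xb, y) \<longleftrightarrow>
    (\<forall>x y'. ereal (inner \<xi> (x - xb) - \<delta> + c) \<le> f (x, y'))"
  unfolding eps_subdiff_def using assms
  by (auto simp: ereal_le_minus_iff inner_Pair)

lemma pair_zero_in_eps_subdiff_if_near_optimal:
  fixes f :: "'a::real_inner \<times> 'b::real_inner \<Rightarrow> ereal"
  assumes M: "marginal f xb = ereal M"
    and near_opt: "f (xb, y) \<le> ereal (M + \<eta>)"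
    and \<xi>: "\<xi> \<in> eps_subdiff (marginal f) \<epsilon> xb"
  shows "(\<xi>, 0) \<in> eps_subdiff f (\<epsilon> + \<eta>) (xb, y)"
proof -
  obtain c where c: "f (xb, y) = ereal c"
    using near_opt marginal_le[of f xb y] M by (cases "f (xb, y)") auto
  have "c \<le> M + \<eta>"
    using near_opt c by simp
  have "ereal (inner \<xi> (x - xb) - (\<epsilon> + \<eta>) + c) \<le> f (x, y')" for x y'
  proof -
    have "ereal (inner \<xi> (x - xb) - (\<epsilon> + \<eta>) + c) \<le> ereal (inner \<xi> (x - xb) - \<epsilon> + M)"
      using \<open>c \<le> M + \<eta>\<close> by simp
    also have "\<dots> \<le> f (x, y')"
      using \<xi> eps_subdiff_marginal_iff[OF M] by blast
    finally show ?thesis .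
  qed
  then show ?thesis
    by (simp add: pair_zero_in_eps_subdiff_iff[where f = f, OF c])
qed

lemma eps_subdiff_marginal_if_pair_zero_in_eps_subdiff:
  fixes f :: "'a::real_inner \<times> 'b::real_inner \<Rightarrow> ereal"
  assumes M: "marginal f xb = ereal M"
    and approx: "\<And>\<eta>. \<eta> > 0 \<Longrightarrow> \<exists>y. (\<xi>, 0) \<in> eps_subdiff f (\<epsilon> + \<eta>) (xb, y)"
  shows "\<xi> \<in> eps_subdiff (marginal f) \<epsilon> xb"
  unfolding eps_subdiff_marginal_iff[OF M]
proof (intro allI)
  fix x y'
  show "ereal (inner \<xi> (x - xb) - \<epsilon> + M) \<le> f (x, y')"
  proof (rule ereal_le_epsilon2)
    fix \<eta> :: real
    assume "\<eta> > 0"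
    then obtain y where y: "(\<xi>, 0) \<in> eps_subdiff f (\<epsilon> + \<eta>) (xb, y)"
      using approx by blast
    then obtain c where c: "f (xb, y) = ereal c"
      using eps_subdiff_finite[OF y] by (cases "f (xb, y)") auto
    have "M \<le> c"
      using marginal_le[of f xb y] M c by simp
    then have "ereal (inner \<xi> (x - xb) - \<epsilon> + M)
        \<le> ereal (inner \<xi> (x - xb) - (\<epsilon> + \<eta>) + c) + ereal \<eta>"
      by simp
    also have "\<dots> \<le> f (x, y') + ereal \<eta>"
      using y pair_zero_in_eps_subdiff_iff[where f = f, OF c] by (blast intro: add_right_mono)
    finally show "ereal (inner \<xi> (x - xb) - \<epsilon> + M) \<le> f (x, y') + ereal \<eta>" .
  qed
qed

lemma eps_subdiff_marginal_eq_Inter_Inter: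
  fixes f :: "'a::real_inner \<times> 'b::real_inner \<Rightarrow> ereal"
  assumes "\<bar>marginal f xb\<bar> \<noteq> \<infinity>"
  shows "eps_subdiff (marginal f) \<epsilon> xb =
    (\<Inter>\<eta>\<in>{0<..}. \<Inter>y\<in>{y. f (xb, y) \<le> marginal f xb + ereal \<eta>}.
      {\<xi>. (\<xi>, 0) \<in> eps_subdiff f (\<epsilon> + \<eta>) (xb, y)})" (is "_ = ?R")
proof
  obtain M where M: "marginal f xb = ereal M"
    using assms by (cases "marginal f xb") auto
  show "eps_subdiff (marginal f) \<epsilon> xb \<subseteq> ?R"
    using pair_zero_in_eps_subdiff_if_near_optimal[OF M] by (auto simp: M)
  show "?R \<subseteq> eps_subdiff (marginal f) \<epsilon> xb"
  proof
    fix \<xi>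
    assume \<xi>: "\<xi> \<in> ?R"
    have "\<exists>y. (\<xi>, 0) \<in> eps_subdiff f (\<epsilon> + \<eta>) (xb, y)" if "\<eta> > 0" for \<eta>
    proof -
      obtain y where "f (xb, y) < ereal (M + \<eta>)"
        using ex_less_marginal_plus[OF M \<open>\<eta> > 0\<close>] .
      then have "\<xi> \<in> {\<xi>. (\<xi>, 0) \<in> eps_subdiff f (\<epsilon> + \<eta>) (xb, y)}"
        using \<xi> \<open>\<eta> > 0\<close> unfolding M by auto
      then show ?thesis
        by blast
    qed
    then show "\<xi> \<in> eps_subdiff (marginal f) \<epsilon> xb"
      by (rule eps_subdiff_marginal_if_pair_zero_in_eps_subdiff[OF M])
  qed
qed

lemma eps_subdiff_marginal_eq_Inter_Union:
  fixes f :: "'a::real_inner \<times> 'b::real_inner \<Rightarrow> ereal"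
  assumes "\<bar>marginal f xb\<bar> \<noteq> \<infinity>"
  shows "eps_subdiff (marginal f) \<epsilon> xb =
    (\<Inter>\<eta>\<in>{0<..}. \<Union>y. {\<xi>. (\<xi>, 0) \<in> eps_subdiff f (\<epsilon> + \<eta>) (xb, y)})"
proof -
  obtain M where M: "marginal f xb = ereal M"
    using assms by (cases "marginal f xb") auto
  have "\<exists>y. (\<xi>, 0) \<in> eps_subdiff f (\<epsilon> + \<eta>) (xb, y)"
    if "\<xi> \<in> eps_subdiff (marginal f) \<epsilon> xb" and "\<eta> > 0" for \<xi> \<eta>
    using ex_less_marginal_plus[OF M \<open>\<eta> > 0\<close>] that
      pair_zero_in_eps_subdiff_if_near_optimal[OF M] by (meson less_imp_le)
  then show ?thesis
    using eps_subdiff_marginal_if_pair_zero_in_eps_subdiff[OF M] by auto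
qed

lemma eps_subdiff_marginal_at_minimizer:
  fixes f :: "'a::real_inner \<times> 'b::real_inner \<Rightarrow> ereal"
  assumes "\<bar>marginal f xb\<bar> \<noteq> \<infinity>" and "marginal f xb = f (xb, y)"
  shows "eps_subdiff (marginal f) \<epsilon> xb = {\<xi>. (\<xi>, 0) \<in> eps_subdiff f \<epsilon> (xb, y)}"
proof -
  obtain M where M: "marginal f xb = ereal M"
    using assms(1) by (cases "marginal f xb") auto
  with assms(2) have "f (xb, y) = ereal M"
    by simp
  then show ?thesis
    by (auto simp: eps_subdiff_marginal_iff[OF M] pair_zero_in_eps_subdiff_iff)
qed

theorem mainTheorem10:
  fixes f :: "(real^'n) \<times> (real^'p) \<Rightarrow> ereal"
    and xb :: "real^'n"
  assumes "proper_fun f" and "nearly_convex_fun f"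
    and "\<bar>marginal f xb\<bar> \<noteq> \<infinity>"
  defines "S_eta \<equiv> \<lambda>\<eta>::real. {y. f (xb, y) \<le> marginal f xb + ereal \<eta>}"
    and "S \<equiv> {y. marginal f xb = f (xb, y)}"
  shows "(\<forall>\<epsilon>\<ge>0.
      eps_subdiff (marginal f) \<epsilon> xb =
        (\<Inter>\<eta>\<in>{0<..}. \<Inter>y\<in>S_eta \<eta>. {\<xi>. (\<xi>, 0) \<in> eps_subdiff f (\<epsilon> + \<eta>) (xb, y)})
    \<and> eps_subdiff (marginal f) \<epsilon> xb =
        (\<Inter>\<eta>\<in>{0<..}. \<Union>y. {\<xi>. (\<xi>, 0) \<in> eps_subdiff f (\<epsilon> + \<eta>) (xb, y)}))
    \<and> (subdiff (marginal f) xb =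
        (\<Inter>\<eta>\<in>{0<..}. \<Inter>y\<in>S_eta \<eta>. {\<xi>. (\<xi>, 0) \<in> eps_subdiff f \<eta> (xb, y)})
    \<and> subdiff (marginal f) xb =
        (\<Inter>\<eta>\<in>{0<..}. \<Union>y. {\<xi>. (\<xi>, 0) \<in> eps_subdiff f \<eta> (xb, y)}))
    \<and> (S \<noteq> {} \<longrightarrow> (\<forall>\<epsilon>\<ge>0. \<forall>y\<in>S.
        eps_subdiff (marginal f) \<epsilon> xb = {\<xi>. (\<xi>, 0) \<in> eps_subdiff f \<epsilon> (xb, y)}))"
  using eps_subdiff_marginal_eq_Inter_Inter[OF assms(3)]
    eps_subdiff_marginal_eq_Inter_Union[OF assms(3)]
    eps_subdiff_marginal_eq_Inter_Inter[OF assms(3), of 0]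
    eps_subdiff_marginal_eq_Inter_Union[OF assms(3), of 0]
    eps_subdiff_marginal_at_minimizer[OF assms(3)]
  unfolding S_eta_def S_def by simp

end
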